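(* For every $n\ge 2$, the set of degrees of vertices of ${\rm OFG}(M_{2,n})$ (equivalently, the set of values of the number of flippable faces over all locally valid MV assignments of $M_{2,n}$) is exactly $\{2,3,4,\dots,2n-2,2n\}$.
   Context: The $2\times n$ Miura-ori $M_{2,n}$ ($n\ge1$) has faces $\alpha_{i,j}$ ($i\in\{1,2\}$, $j\in\{1,\dots,n\}$), interior vertices $x_1,\dots,x_{n-1}$, and creases $e_0$ and $e_{3k-1},e_{3k},e_{3k+1}$ ($k=1,\dots,n-1$). At $x_k$ the creases are left $e_{3k-3}$, top $e_{3k-1}$, right $e_{3k}$, bottom $e_{3k+1}$. Face $\alpha_{1,j}$ is bordered by those of $e_{3j-4}$ (iff $j\ge2$), $e_{3j-3}$, $e_{3j-1}$ (iff $j\le n-1$); $\alpha_{2,j}$ by those of $e_{3j-2}$ (iff $j\ge2$), $e_{3j-3}$, $e_{3j+1}$ (iff $j\le n-1$). An MV assignment $\mu$ maps creases to $\{1,-1\}$; it is locally valid if for each $k$ exactly one of $\mu(e_{3k-1}),\mu(e_{3k}),\mu(e_{3k+1})$ differs from $\mu(e_{3k-3})$. The face flip $\mu_\alpha$ negates $\mu$ on the creases bordering $\alpha$; $\alpha$ is flippable under $\mu$ if $\mu,\mu_\alpha$ are both locally valid. ${\rm OFG}(M_{2,n})$ has the locally valid assignments as vertices, with $\mu\sim\mu_\alpha$ for each flippable $\alpha$. *)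

theory Defs
  imports Main
begin

text \<open>The 2 x n Miura-ori M_{2,n}. Creases are indexed by natural numbers:
 the crease e_m is the number m. The creases of M_{2,n} are e_0 and
 e_{3k-1}, e_{3k}, e_{3k+1} for k = 1..n-1.\<close>

definition creases :: "nat \<Rightarrow> nat set" where
  "creases n = {0} \<union> (\<Union>k\<in>{1..n-1}. {3*k-1, 3*k, 3*k+1})"

definition faces :: "nat \<Rightarrow> (nat \<times> nat) set" where
  "faces n = {1,2} \<times> {1..n}"

definition face_creases :: "nat \<Rightarrow> nat \<times> nat \<Rightarrow> nat set" where
  "face_creases n f = (case f of (i, j) \<Rightarrow>
     (if i = 1 then
        (if 2 \<le> j then {3*j-4} else {}) \<union> {3*j-3} \<union> (if j \<le> n-1 then {3*j-1} else {})
      else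
        (if 2 \<le> j then {3*j-2} else {}) \<union> {3*j-3} \<union> (if j \<le> n-1 then {3*j+1} else {})))"

text \<open>MV assignments: maps from the creases to {1,-1}. To represent them as total
 functions uniquely, we fix the value 1 outside the set of creases.\<close>
definition mv_assignments :: "nat \<Rightarrow> (nat \<Rightarrow> int) set" where
  "mv_assignments n = {\<mu>. (\<forall>e\<in>creases n. \<mu> e \<in> {1, -1}) \<and> (\<forall>e. e \<notin> creases n \<longrightarrow> \<mu> e = 1)}"

text \<open>Local validity: at each interior vertex x_k exactly one of the top, right,
 bottom creases has a value different from the left crease.\<close>
definition locally_valid :: "nat \<Rightarrow> (nat \<Rightarrow> int) \<Rightarrow> bool" where
  "locally_valid n \<mu> \<longleftrightarrow> \<mu> \<in> mv_assignments n \<and>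
     (\<forall>k\<in>{1..n-1}. card {e\<in>{3*k-1, 3*k, 3*k+1}. \<mu> e \<noteq> \<mu> (3*k-3)} = 1)"

definition face_flip :: "nat \<Rightarrow> (nat \<Rightarrow> int) \<Rightarrow> nat \<times> nat \<Rightarrow> (nat \<Rightarrow> int)" where
  "face_flip n \<mu> f = (\<lambda>e. if e \<in> face_creases n f then - \<mu> e else \<mu> e)"

definition flippable :: "nat \<Rightarrow> (nat \<Rightarrow> int) \<Rightarrow> nat \<times> nat \<Rightarrow> bool" where
  "flippable n \<mu> f \<longleftrightarrow> f \<in> faces n \<and> locally_valid n \<mu> \<and> locally_valid n (face_flip n \<mu> f)"

definition ofg_vertices :: "nat \<Rightarrow> (nat \<Rightarrow> int) set" where
  "ofg_vertices n = {\<mu>. locally_valid n \<mu>}"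

definition ofg_adj :: "nat \<Rightarrow> (nat \<Rightarrow> int) \<Rightarrow> (nat \<Rightarrow> int) \<Rightarrow> bool" where
  "ofg_adj n \<mu> \<nu> \<longleftrightarrow> (\<exists>f. flippable n \<mu> f \<and> \<nu> = face_flip n \<mu> f)"

definition ofg_degree :: "nat \<Rightarrow> (nat \<Rightarrow> int) \<Rightarrow> nat" where
  "ofg_degree n \<mu> = card {\<nu>. ofg_adj n \<mu> \<nu>}"

end

theory Submission
  imports Defs
begin

text \<open>At an interior vertex x_k of a locally valid assignment exactly one of the top,
right and bottom creases disagrees with the left crease; call it the odd side of x_k.
A face flip negates two of the four creases at each vertex it touches, and a local check shows
that it breaks x_k only if the odd side is top or bottom and the face is one of two faces
next to x_k determined by that side. So the flippable faces are exactly the faces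
blocked by no vertex, and their number is a function of the sequence of odd sides, every sequence
being realised by some assignment.

A vertex with odd side top or bottom blocks two faces, so either nothing is blocked (2n
flippable faces) or at most 2n - 2 faces remain. Only x_1 can block faces of the
first column and only x_{n-1} faces of the last, one each, so at least two faces remain.
Staircases (the first m odd sides on top) attain the even values, and turning the first
step to the bottom makes two blocked pairs overlap, which gives the odd ones. Finally distinct
faces have distinct crease sets, so the degree in the flip graph equals the number of flippable
faces.\<close>

datatype side = Top | Right | Bottom

definition exactly_one_differs :: "int \<Rightarrow> int \<Rightarrow> int \<Rightarrow> int \<Rightarrow> bool" where
  "exactly_one_differs l t r b \<longleftrightarrow> of_bool (t \<noteq> l) + of_bool (r \<noteq> l) + of_bool (b \<noteq> l) = (1::nat)"

definition vertex_valid :: "(nat \<Rightarrow> int) \<Rightarrow> nat \<Rightarrow> bool" where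
  "vertex_valid \<mu> k \<longleftrightarrow> exactly_one_differs (\<mu> (3*k-3)) (\<mu> (3*k-1)) (\<mu> (3*k)) (\<mu> (3*k+1))"

lemma card_filter_three:
  assumes "distinct [a, b, c]"
  shows "card {x\<in>{a, b, c}. P x} = of_bool (P a) + of_bool (P b) + of_bool (P c)"
proof -
  have "card {x\<in>{a, b, c}. P x} = (\<Sum>x\<in>{a, b, c}. of_bool (P x))"
    by (simp add: Int_def conj_commute)
  then show ?thesis using assms by simp
qed

lemma locally_valid_iff_vertex_valid:
  "locally_valid n \<mu> \<longleftrightarrow> \<mu> \<in> mv_assignments n \<and> (\<forall>k\<in>{1..n-1}. vertex_valid \<mu> k)"
proof -
  have "card {e\<in>{3*k-1, 3*k, 3*k+1}. \<mu> e \<noteq> \<mu> (3*k-3)} = 1 \<longleftrightarrow> vertex_valid \<mu> k"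
    if "k \<in> {1..n-1}" for k
    using that by (subst card_filter_three) (auto simp: vertex_valid_def exactly_one_differs_def)
  then show ?thesis unfolding locally_valid_def by auto
qed

definition odd_side :: "(nat \<Rightarrow> int) \<Rightarrow> nat \<Rightarrow> side" where
  "odd_side \<mu> k =
     (if \<mu> (3*k-1) \<noteq> \<mu> (3*k-3) then Top else if \<mu> (3*k) \<noteq> \<mu> (3*k-3) then Right else Bottom)"

lemma odd_side_eq_iff:
  assumes "vertex_valid \<mu> k"
  shows "odd_side \<mu> k = Top \<longleftrightarrow> \<mu> (3*k-1) \<noteq> \<mu> (3*k-3)"
    and "odd_side \<mu> k = Bottom \<longleftrightarrow> \<mu> (3*k+1) \<noteq> \<mu> (3*k-3)"
  using assms unfolding vertex_valid_def exactly_one_differs_def odd_side_def by auto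

lemma exactly_one_differs_flip:
  fixes l t r b :: int
  assumes "l \<in> {1, -1}" "t \<in> {1, -1}" "r \<in> {1, -1}" "b \<in> {1, -1}" "exactly_one_differs l t r b"
  shows "exactly_one_differs (-l) (-t) r b \<longleftrightarrow> t = l"
    and "exactly_one_differs l (-t) (-r) b \<longleftrightarrow> b = l"
    and "exactly_one_differs (-l) t r (-b) \<longleftrightarrow> b = l"
    and "exactly_one_differs l t (-r) (-b) \<longleftrightarrow> t = l"
  using assms unfolding exactly_one_differs_def by auto

definition vertex_creases :: "nat \<Rightarrow> nat set" where
  "vertex_creases k = {3*k-3, 3*k-1, 3*k, 3*k+1}"

lemma vertex_creases_subset:
  assumes "k \<in> {1..n-1}" shows "vertex_creases k \<subseteq> creases n"
proof -
  have "3*k-3 \<in> creases n"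
  proof (cases "k = 1")
    case False
    then have "k-1 \<in> {1..n-1}" "3*k-3 = 3*(k-1)" using assms by auto
    then show ?thesis unfolding creases_def by (intro UnI2 UN_I[of "k-1"]) auto
  qed (simp add: creases_def)
  moreover have "{3*k-1, 3*k, 3*k+1} \<subseteq> creases n"
    using assms unfolding creases_def by blast
  ultimately show ?thesis unfolding vertex_creases_def by simp
qed

lemma face_creases_subset:
  assumes "(i, j) \<in> faces n" shows "face_creases n (i, j) \<subseteq> creases n"
proof -
  have "2 \<le> j \<Longrightarrow> 3*j-4 = 3*(j-1)-1 \<and> 3*j-3 = 3*(j-1) \<and> 3*j-2 = 3*(j-1)+1" by auto
  then have "face_creases n (i, j) \<subseteq> (if j = 1 then {0} else vertex_creases (j-1))
      \<union> (if j \<le> n-1 then vertex_creases j else {})"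
    using assms by (auto simp: faces_def face_creases_def vertex_creases_def)
  moreover have "(if j = 1 then {0} else vertex_creases (j-1)) \<subseteq> creases n"
  proof (cases "j = 1")
    case False
    then have "j-1 \<in> {1..n-1}" using assms by (auto simp: faces_def)
    then show ?thesis using False vertex_creases_subset by simp
  qed (simp add: creases_def)
  moreover have "(if j \<le> n-1 then vertex_creases j else {}) \<subseteq> creases n"
    using assms vertex_creases_subset[of j n] by (auto simp: faces_def)
  ultimately show ?thesis by blast
qed

lemma face_flip_mv_assignments:
  assumes "\<mu> \<in> mv_assignments n" "f \<in> faces n"
  shows "face_flip n \<mu> f \<in> mv_assignments n"
  using assms face_creases_subset[of "fst f" "snd f" n]
  unfolding mv_assignments_def face_flip_def by auto

lemma mem_face_creases_at_vertex:
  assumes "k \<in> {1..n-1}" "(i, j) \<in> faces n"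
  shows "3*k-3 \<in> face_creases n (i, j) \<longleftrightarrow> j = k"
    and "3*k-1 \<in> face_creases n (i, j) \<longleftrightarrow> i = 1 \<and> (j = k \<or> j = k+1)"
    and "3*k \<in> face_creases n (i, j) \<longleftrightarrow> j = k+1"
    and "3*k+1 \<in> face_creases n (i, j) \<longleftrightarrow> i = 2 \<and> (j = k \<or> j = k+1)"
  using assms by (auto simp: face_creases_def faces_def split: if_splits; presburger)+

text \<open>Only disagreements with the left crease matter, so flipping two creases at a vertex acts
like flipping the other two. Flipping left and top (or right and bottom) keeps the vertex valid
unless its odd side is top; flipping left and bottom (or top and right) unless it is bottom.\<close>

fun blocked_by :: "side \<Rightarrow> nat \<Rightarrow> (nat \<times> nat) set" where
  "blocked_by Top k = {(1, k), (2, k+1)}"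
| "blocked_by Right k = {}"
| "blocked_by Bottom k = {(2, k), (1, k+1)}"

lemma vertex_valid_face_flip:
  assumes "\<mu> \<in> mv_assignments n" "k \<in> {1..n-1}" "vertex_valid \<mu> k" "(i, j) \<in> faces n"
  shows "vertex_valid (face_flip n \<mu> (i, j)) k \<longleftrightarrow> (i, j) \<notin> blocked_by (odd_side \<mu> k) k"
proof -
  have "\<mu> e \<in> {1, -1}" if "e \<in> vertex_creases k" for e
    using assms(1) vertex_creases_subset[OF assms(2)] that unfolding mv_assignments_def by auto
  then have signs: "\<mu> (3*k-3) \<in> {1, -1}" "\<mu> (3*k-1) \<in> {1, -1}" "\<mu> (3*k) \<in> {1, -1}"
    "\<mu> (3*k+1) \<in> {1, -1}"
    unfolding vertex_creases_def by simp_all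
  note flips = exactly_one_differs_flip[OF signs assms(3)[unfolded vertex_valid_def]]
  have "i = 1 \<or> i = 2" using assms(4) by (auto simp: faces_def)
  then consider "i = 1" "j = k" | "i = 1" "j = k+1" | "i = 2" "j = k" | "i = 2" "j = k+1"
    | "j \<noteq> k" "j \<noteq> k+1"
    by blast
  then show ?thesis
    using mem_face_creases_at_vertex[OF assms(2,4)] odd_side_eq_iff[OF assms(3)] flips assms(3)
    unfolding vertex_valid_def face_flip_def
    by cases (cases "odd_side \<mu> k"; auto)+
qed

definition blocked_faces :: "nat \<Rightarrow> (nat \<Rightarrow> side) \<Rightarrow> (nat \<times> nat) set" where
  "blocked_faces n \<sigma> = (\<Union>k\<in>{1..n-1}. blocked_by (\<sigma> k) k)"

lemma flippable_faces_eq: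
  assumes "locally_valid n \<mu>"
  shows "{f. flippable n \<mu> f} = faces n - blocked_faces n (odd_side \<mu>)"
proof -
  have mv: "\<mu> \<in> mv_assignments n" and valid: "\<forall>k\<in>{1..n-1}. vertex_valid \<mu> k"
    using assms locally_valid_iff_vertex_valid by auto
  have "locally_valid n (face_flip n \<mu> (i, j)) \<longleftrightarrow> (i, j) \<notin> blocked_faces n (odd_side \<mu>)"
    if "(i, j) \<in> faces n" for i j
    using vertex_valid_face_flip[OF mv _ _ that] valid face_flip_mv_assignments[OF mv that]
    unfolding locally_valid_iff_vertex_valid blocked_faces_def by blast
  then show ?thesis using assms unfolding flippable_def by auto
qed

lemma inj_on_face_creases:
  assumes "2 \<le> n" shows "inj_on (face_creases n) (faces n)"
proof (rule inj_onI)
  fix f g assume f: "f \<in> faces n" and g: "g \<in> faces n" and eq: "face_creases n f = face_creases n g"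
  obtain i j i' j' where ij: "f = (i, j)" "g = (i', j')" by (cases f, cases g)
  define k where "k = (if j \<le> n-1 then j else j-1)"
  have k: "k \<in> {1..n-1}" "j = k \<or> j = k+1" using assms f unfolding k_def ij faces_def by auto
  note mem = mem_face_creases_at_vertex[OF k(1)]
  have "j' = j" using mem(1)[of i j] mem(1)[of i' j'] mem(3)[of i j] mem(3)[of i' j'] eq f g ij k(2)
    by auto
  moreover have "i' = i"
    using mem(2)[of i j] mem(2)[of i' j'] eq f g ij k(2) \<open>j' = j\<close> by (auto simp: faces_def)
  ultimately show "f = g" using ij by simp
qed

lemma inj_on_face_flip:
  assumes "2 \<le> n" "\<mu> \<in> mv_assignments n"
  shows "inj_on (face_flip n \<mu>) (faces n)"
proof (rule inj_onI)
  fix f g assume f: "f \<in> faces n" and g: "g \<in> faces n" and eq: "face_flip n \<mu> f = face_flip n \<mu> g"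
  have "e \<in> face_creases n f \<longleftrightarrow> e \<in> face_creases n g" if "e \<in> creases n" for e
  proof -
    have "\<mu> e \<noteq> - \<mu> e" using assms(2) that unfolding mv_assignments_def by auto
    then show ?thesis using fun_cong[OF eq, of e] unfolding face_flip_def by (auto split: if_splits)
  qed
  then have "face_creases n f = face_creases n g"
    using face_creases_subset[of "fst f" "snd f" n] face_creases_subset[of "fst g" "snd g" n] f g
    by auto
  then show "f = g" using inj_on_face_creases[OF assms(1)] f g by (auto dest: inj_onD)
qed

lemma ofg_degree_eq_card_flippable:
  assumes "2 \<le> n" "locally_valid n \<mu>"
  shows "ofg_degree n \<mu> = card {f. flippable n \<mu> f}"
proof -
  have "{\<nu>. ofg_adj n \<mu> \<nu>} = face_flip n \<mu> ` {f. flippable n \<mu> f}"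
    unfolding ofg_adj_def by blast
  moreover have "inj_on (face_flip n \<mu>) {f. flippable n \<mu> f}"
    using assms(2) inj_on_face_flip[OF assms(1)]
    by (auto simp: flippable_def locally_valid_def intro: inj_on_subset)
  ultimately show ?thesis unfolding ofg_degree_def by (simp add: card_image)
qed

primrec spine_sign :: "(nat \<Rightarrow> side) \<Rightarrow> nat \<Rightarrow> int" where
  "spine_sign \<sigma> 0 = 1"
| "spine_sign \<sigma> (Suc k) = (if \<sigma> (Suc k) = Right then - spine_sign \<sigma> k else spine_sign \<sigma> k)"

text \<open>The creases e_{3q} form the horizontal line through the vertices and carry
spine_sign; e_{3q+2} is the top crease of x_{q+1} and e_{3q+1} the bottom crease of x_q.\<close>

definition realization :: "nat \<Rightarrow> (nat \<Rightarrow> side) \<Rightarrow> nat \<Rightarrow> int" where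
  "realization n \<sigma> e =
     (if e \<notin> creases n then 1
      else if e mod 3 = 0 then spine_sign \<sigma> (e div 3)
      else if e mod 3 = 2 then (if \<sigma> (e div 3 + 1) = Top then -1 else 1) * spine_sign \<sigma> (e div 3)
      else (if \<sigma> (e div 3) = Bottom then -1 else 1) * spine_sign \<sigma> (e div 3 - 1))"

lemma spine_sign_cases: "spine_sign \<sigma> k \<in> {1, -1}"
  by (induction k) auto

lemma realization_at_vertex:
  assumes "k \<in> {1..n-1}"
  shows "realization n \<sigma> (3*k-3) = spine_sign \<sigma> (k-1)"
    and "realization n \<sigma> (3*k-1) = (if \<sigma> k = Top then -1 else 1) * spine_sign \<sigma> (k-1)"
    and "realization n \<sigma> (3*k) = (if \<sigma> k = Right then -1 else 1) * spine_sign \<sigma> (k-1)"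
    and "realization n \<sigma> (3*k+1) = (if \<sigma> k = Bottom then -1 else 1) * spine_sign \<sigma> (k-1)"
proof -
  have right: "realization n \<sigma> (3*q) = spine_sign \<sigma> q" if "3*q \<in> creases n" for q
    using that by (simp add: realization_def)
  have bottom: "realization n \<sigma> (3*q+1) = (if \<sigma> q = Bottom then -1 else 1) * spine_sign \<sigma> (q-1)"
    if "3*q+1 \<in> creases n" for q
  proof -
    have "(3*q+1) mod 3 = 1" "(3*q+1) div 3 = q" by presburger+
    then show ?thesis using that unfolding realization_def by simp
  qed
  have top: "realization n \<sigma> (3*q+2) = (if \<sigma> (q+1) = Top then -1 else 1) * spine_sign \<sigma> q"
    if "3*q+2 \<in> creases n" for q
  proof -
    have "(3*q+2) mod 3 = 2" "(3*q+2) div 3 = q" by presburger+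
    then show ?thesis using that unfolding realization_def by simp
  qed
  obtain a where a: "k = a + 1" using assms by (cases k) auto
  have "3*k-3 = 3*a" "3*k-1 = 3*a+2" "3*k = 3*(a+1)" "3*k+1 = 3*(a+1)+1" using a by auto
  then show "realization n \<sigma> (3*k-3) = spine_sign \<sigma> (k-1)"
    and "realization n \<sigma> (3*k-1) = (if \<sigma> k = Top then -1 else 1) * spine_sign \<sigma> (k-1)"
    and "realization n \<sigma> (3*k) = (if \<sigma> k = Right then -1 else 1) * spine_sign \<sigma> (k-1)"
    and "realization n \<sigma> (3*k+1) = (if \<sigma> k = Bottom then -1 else 1) * spine_sign \<sigma> (k-1)"
    using vertex_creases_subset[OF assms] right[of a] right[of "a+1"] top[of a] bottom[of "a+1"] a
    unfolding vertex_creases_def by simp_all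
qed

lemma vertex_valid_realization:
  assumes "k \<in> {1..n-1}"
  shows "vertex_valid (realization n \<sigma>) k" and "odd_side (realization n \<sigma>) k = \<sigma> k"
proof -
  have "spine_sign \<sigma> (k-1) \<noteq> 0" using spine_sign_cases[of \<sigma> "k-1"] by auto
  then show "vertex_valid (realization n \<sigma>) k" and "odd_side (realization n \<sigma>) k = \<sigma> k"
    unfolding vertex_valid_def exactly_one_differs_def odd_side_def realization_at_vertex[OF assms]
    by (cases "\<sigma> k"; simp)+
qed

lemma realization_locally_valid: "locally_valid n (realization n \<sigma>)"
proof -
  have "realization n \<sigma> \<in> mv_assignments n"
    using spine_sign_cases unfolding mv_assignments_def realization_def by auto
  then show ?thesis
    unfolding locally_valid_iff_vertex_valid using vertex_valid_realization(1) by blast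
qed

lemma blocked_faces_cong:
  "(\<And>k. k \<in> {1..n-1} \<Longrightarrow> \<sigma> k = \<tau> k) \<Longrightarrow> blocked_faces n \<sigma> = blocked_faces n \<tau>"
  unfolding blocked_faces_def by simp

lemma card_flippable_image:
  "(\<lambda>\<mu>. card {f. flippable n \<mu> f}) ` ofg_vertices n = range (\<lambda>\<sigma>. card (faces n - blocked_faces n \<sigma>))"
proof (intro equalityI subsetI)
  fix c assume "c \<in> (\<lambda>\<mu>. card {f. flippable n \<mu> f}) ` ofg_vertices n"
  then show "c \<in> range (\<lambda>\<sigma>. card (faces n - blocked_faces n \<sigma>))"
    by (auto simp: ofg_vertices_def flippable_faces_eq)
next
  fix c assume "c \<in> range (\<lambda>\<sigma>. card (faces n - blocked_faces n \<sigma>))"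
  then obtain \<sigma> where c: "c = card (faces n - blocked_faces n \<sigma>)" by blast
  have "blocked_faces n (odd_side (realization n \<sigma>)) = blocked_faces n \<sigma>"
    using vertex_valid_realization(2) by (rule blocked_faces_cong)
  then have "c = card {f. flippable n (realization n \<sigma>) f}"
    using c realization_locally_valid by (simp add: flippable_faces_eq)
  then show "c \<in> (\<lambda>\<mu>. card {f. flippable n \<mu> f}) ` ofg_vertices n"
    using realization_locally_valid by (auto simp: ofg_vertices_def)
qed

lemma finite_faces: "finite (faces n)"
  and card_faces: "card (faces n) = 2*n"
  unfolding faces_def by (simp_all add: card_cartesian_product)

lemma blocked_faces_subset: "blocked_faces n \<sigma> \<subseteq> faces n"
proof -
  have "blocked_by s k \<subseteq> faces n" if "k \<in> {1..n-1}" for s k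
    using that by (cases s) (auto simp: faces_def)
  then show ?thesis unfolding blocked_faces_def by blast
qed

lemma card_unblocked_faces:
  "card (faces n - blocked_faces n \<sigma>) = 2*n - card (blocked_faces n \<sigma>)"
  using card_Diff_subset[OF finite_subset[OF blocked_faces_subset finite_faces] blocked_faces_subset]
  by (simp add: card_faces)

lemma unblocked_end_faces:
  assumes "2 \<le> n"
  obtains i i' where "(i, 1) \<in> faces n - blocked_faces n \<sigma>" "(i', n) \<in> faces n - blocked_faces n \<sigma>"
proof -
  let ?i = "if \<sigma> 1 = Top then 2 else 1" and ?i' = "if \<sigma> (n-1) = Top then 1 else 2"
  have "(?i, 1) \<notin> blocked_by (\<sigma> k) k" "(?i', n) \<notin> blocked_by (\<sigma> k) k" if "k \<in> {1..n-1}" for k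
    using that by (cases "\<sigma> k"; auto)+
  moreover have "(?i, 1) \<in> faces n" "(?i', n) \<in> faces n" using assms by (auto simp: faces_def)
  ultimately show ?thesis using that unfolding blocked_faces_def by blast
qed

lemma card_unblocked_faces_ge_2:
  assumes "2 \<le> n" shows "2 \<le> card (faces n - blocked_faces n \<sigma>)"
proof -
  obtain i i' where "(i, 1) \<in> faces n - blocked_faces n \<sigma>" "(i', n) \<in> faces n - blocked_faces n \<sigma>"
    using unblocked_end_faces[OF assms] .
  moreover have "card {(i, 1), (i', n)} = 2" using assms by simp
  ultimately show ?thesis
    by (metis card_mono empty_subsetI finite_Diff finite_faces insert_subset)
qed

lemma card_unblocked_faces_cases:
  "card (faces n - blocked_faces n \<sigma>) = 2*n \<or> card (faces n - blocked_faces n \<sigma>) \<le> 2*n - 2"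
proof (cases "\<forall>k\<in>{1..n-1}. \<sigma> k = Right")
  case True
  then have "blocked_faces n \<sigma> = {}" unfolding blocked_faces_def by simp
  then show ?thesis by (simp add: card_faces)
next
  case False
  then obtain k where k: "k \<in> {1..n-1}" "\<sigma> k \<noteq> Right" by blast
  then have "card (blocked_by (\<sigma> k) k) = 2" by (cases "\<sigma> k") auto
  moreover have "blocked_by (\<sigma> k) k \<subseteq> blocked_faces n \<sigma>" using k(1) unfolding blocked_faces_def by blast
  ultimately have "2 \<le> card (blocked_faces n \<sigma>)"
    by (metis card_mono finite_faces blocked_faces_subset finite_subset)
  then show ?thesis unfolding card_unblocked_faces by arith
qed

lemma blocked_faces_Top_Bottom:
  "blocked_faces n \<sigma> = (\<Union>k\<in>{k\<in>{1..n-1}. \<sigma> k = Top}. blocked_by Top k)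
     \<union> (\<Union>k\<in>{k\<in>{1..n-1}. \<sigma> k = Bottom}. blocked_by Bottom k)"
proof -
  have "blocked_by (\<sigma> k) k = (if \<sigma> k = Top then blocked_by Top k else {})
      \<union> (if \<sigma> k = Bottom then blocked_by Bottom k else {})" for k
    by (cases "\<sigma> k") auto
  then show ?thesis unfolding blocked_faces_def by (auto simp del: blocked_by.simps split: if_splits)
qed

lemma card_UN_blocked_by_Top:
  assumes "finite K" shows "card (\<Union>k\<in>K. blocked_by Top k) = 2 * card K"
  using assms by (subst card_UN_disjoint) auto

definition staircase :: "nat \<Rightarrow> nat \<Rightarrow> side" where
  "staircase m k = (if k \<le> m then Top else Right)"

lemma card_unblocked_staircase:
  assumes "m \<le> n-1" shows "card (faces n - blocked_faces n (staircase m)) = 2*n - 2*m"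
proof -
  have "{k\<in>{1..n-1}. staircase m k = Top} = {1..m}" "{k\<in>{1..n-1}. staircase m k = Bottom} = {}"
    using assms by (auto simp: staircase_def)
  then have "blocked_faces n (staircase m) = (\<Union>k\<in>{1..m}. blocked_by Top k)"
    unfolding blocked_faces_Top_Bottom by (simp only: UN_empty Un_empty_right)
  then have "card (blocked_faces n (staircase m)) = 2*m"
    using card_UN_blocked_by_Top[of "{1..m}"] by simp
  then show ?thesis by (simp add: card_unblocked_faces)
qed

lemma card_unblocked_staircase_Bottom:
  assumes "2 \<le> m" "m \<le> n-1"
  shows "card (faces n - blocked_faces n ((staircase m)(1 := Bottom))) = 2*n - 2*m + 1"
proof -
  have sides: "{k\<in>{1..n-1}. ((staircase m)(1 := Bottom)) k = Top} = {2..m}"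
    "{k\<in>{1..n-1}. ((staircase m)(1 := Bottom)) k = Bottom} = {1}"
    using assms by (auto simp: staircase_def)
  have "(1, 2) \<in> (\<Union>k\<in>{2..m}. blocked_by Top k)" using assms by force
  then have "blocked_faces n ((staircase m)(1 := Bottom)) = insert (2, 1) (\<Union>k\<in>{2..m}. blocked_by Top k)"
    unfolding blocked_faces_Top_Bottom sides by auto
  moreover have "(2, 1) \<notin> (\<Union>k\<in>{2..m}. blocked_by Top k)" by auto
  ultimately have "card (blocked_faces n ((staircase m)(1 := Bottom))) = 2*m - 1"
    using assms card_UN_blocked_by_Top[of "{2..m}"] by simp
  then show ?thesis using assms by (simp add: card_unblocked_faces)
qed

lemma range_card_unblocked_faces:
  assumes "2 \<le> n"
  shows "range (\<lambda>\<sigma>. card (faces n - blocked_faces n \<sigma>)) = {2..2*n-2} \<union> {2*n}"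
proof
  show "range (\<lambda>\<sigma>. card (faces n - blocked_faces n \<sigma>)) \<subseteq> {2..2*n-2} \<union> {2*n}"
    using card_unblocked_faces_ge_2[OF assms] card_unblocked_faces_cases by fastforce
next
  show "{2..2*n-2} \<union> {2*n} \<subseteq> range (\<lambda>\<sigma>. card (faces n - blocked_faces n \<sigma>))"
  proof
    fix c assume c: "c \<in> {2..2*n-2} \<union> {2*n}"
    show "c \<in> range (\<lambda>\<sigma>. card (faces n - blocked_faces n \<sigma>))"
    proof (cases "even c")
      case True
      then have "c = 2*n - 2*(n - c div 2)" "n - c div 2 \<le> n-1" using c by auto
      then show ?thesis using card_unblocked_staircase by (metis rangeI)
    next
      case False
      then have "3 \<le> c" "c \<le> 2*n-3" using c by auto presburger+
      with False have "c = 2*n - 2*(n - c div 2) + 1" "2 \<le> n - c div 2" "n - c div 2 \<le> n-1"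
        by (auto elim!: oddE)
      then show ?thesis using card_unblocked_staircase_Bottom by (metis rangeI)
    qed
  qed
qed

theorem theorem4p9:
  fixes n :: nat
  assumes "n \<ge> 2"
  shows "ofg_degree n ` ofg_vertices n = {2..2*n-2} \<union> {2*n} \<and>
         (\<lambda>\<mu>. card {f. flippable n \<mu> f}) ` ofg_vertices n = {2..2*n-2} \<union> {2*n}"
proof -
  have "(\<lambda>\<mu>. card {f. flippable n \<mu> f}) ` ofg_vertices n = {2..2*n-2} \<union> {2*n}"
    unfolding card_flippable_image using range_card_unblocked_faces[OF assms] .
  moreover have "ofg_degree n ` ofg_vertices n = (\<lambda>\<mu>. card {f. flippable n \<mu> f}) ` ofg_vertices n"
    using ofg_degree_eq_card_flippable[OF assms] by (simp add: ofg_vertices_def)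
  ultimately show ?thesis by simp
qed

end
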